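(* Let $n\in\mathbb{N}$, let $\nu$ be a Lévy measure on $\mathbb{R}^n$, let $\sigma^2\in\mathbb{R}^{n\times n}$ be symmetric nonnegative definite and $\Gamma\in\mathbb{R}^n$. For $\Lambda>1$ let $h_\Lambda\ge1$ and $T_\Lambda>0$ be such that $\lim_{\Lambda\to\infty}\frac{\Lambda}{h_\Lambda}=\lim_{\Lambda\to\infty}\frac{\Lambda}{h_\Lambda T_\Lambda}=\infty$, and let $\xi^\Lambda$ be a Lévy process with generating triplet $(\sigma^2,\nu|_{\{y\in\mathbb{R}^n:|y|\le h_\Lambda\}},\Gamma)$. Then for every $\delta>0$ and $k\ge0$ there is $\Lambda_1$ such that for all $\Lambda>\Lambda_1$, \[ \sup_{t\le T_\Lambda}(1\vee t^{-k})\,\mathbb{P}(|\xi^\Lambda_t|>\Lambda)\le\exp\Big(-(1-\delta)\frac{\Lambda}{h_\Lambda}\ln\frac{\Lambda}{h_\Lambda T_\Lambda}\Big). \]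
   Context: Generating triplet convention: a Lévy process $\zeta$ with triplet $(\sigma^2,\mu,\Gamma)$ has $\mathbb{E}e^{i\langle\lambda,\zeta_t\rangle}=\exp(t(-\frac12\langle\lambda,\sigma^2\lambda\rangle+i\langle\lambda,\Gamma\rangle+\int(e^{i\langle\lambda,y\rangle}-1-i\langle\lambda,y\rangle\mathbf 1_{\{|y|\le1\}})\mu(dy)))$. *)

theory Defs
  imports "HOL-Probability.Probability"
begin

definition levy_measure :: "(real^'n) measure \<Rightarrow> bool" where
  "levy_measure nu \<longleftrightarrow>
     sets nu = sets borel \<and> emeasure nu {0} = 0 \<and>
     (\<integral>\<^sup>+ y. ennreal (min 1 ((norm y)\<^sup>2)) \<partial>nu) < \<infinity>"

definition sym_nonneg_def :: "real^'n^'n \<Rightarrow> bool" where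
  "sym_nonneg_def S \<longleftrightarrow> transpose S = S \<and> (\<forall>x. 0 \<le> x \<bullet> (S *v x))"

text \<open>Levy exponent for the generating triplet (S, mu, G), with truncation
  function the indicator of the closed unit ball.\<close>
definition levy_exponent ::
  "real^'n^'n \<Rightarrow> (real^'n) measure \<Rightarrow> real^'n \<Rightarrow> real^'n \<Rightarrow> complex" where
  "levy_exponent S mu G l =
     - complex_of_real ((l \<bullet> (S *v l)) / 2) + \<i> * complex_of_real (l \<bullet> G)
     + integral\<^sup>L mu (\<lambda>y. exp (\<i> * complex_of_real (l \<bullet> y)) - 1
          - \<i> * complex_of_real (l \<bullet> y) * complex_of_real (indicator (cball 0 1) y))"

definition levy_process ::
  "'a measure \<Rightarrow> (real \<Rightarrow> 'a \<Rightarrow> real^'n) \<Rightarrow> real^'n^'n \<Rightarrow> (real^'n) measure \<Rightarrow> real^'n \<Rightarrow> bool" where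
  "levy_process M X S mu G \<longleftrightarrow>
     prob_space M \<and>
     (\<forall>t\<ge>0. X t \<in> borel_measurable M) \<and>
     (\<forall>\<omega>\<in>space M. X 0 \<omega> = 0) \<and>
     (\<forall>(tt::nat \<Rightarrow> real) m. 0 \<le> tt 0 \<and> mono tt \<longrightarrow>
        prob_space.indep_vars M (\<lambda>_. borel) (\<lambda>i \<omega>. X (tt (Suc i)) \<omega> - X (tt i) \<omega>) {..<m}) \<and>
     (\<forall>s t. 0 \<le> s \<and> s \<le> t \<longrightarrow>
        distr M borel (\<lambda>\<omega>. X t \<omega> - X s \<omega>) = distr M borel (X (t - s))) \<and>
     (AE \<omega> in M. (\<forall>t\<ge>0. continuous (at_right t) (\<lambda>s. X s \<omega>)) \<and>
                  (\<forall>t>0. \<exists>L. ((\<lambda>s. X s \<omega>) \<longlongrightarrow> L) (at_left t))) \<and>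
     (\<forall>t\<ge>0. \<forall>l. integral\<^sup>L M (\<lambda>\<omega>. exp (\<i> * complex_of_real (l \<bullet> X t \<omega>)))
                   = exp (complex_of_real t * levy_exponent S mu G l))"

end

(*
  Truncating the Levy measure at h makes the Levy exponent, restricted to a line R u, extend to
  an entire function whose modulus on the circle of radius r is at most
  r^2 |u.S u| + r |u.G| + e^(h r) \<integral> min 1 |y|^2 d nu.  If the characteristic function of a
  real random variable Y extends to an entire function F, then Y has exponential moments:
  Cauchy's estimate bounds F^(2m)(0), the central differences of F on the real line recover
  E Y^(2m) in the limit (Fatou), and summing the even moments gives
  E e^(theta Y) \<le> 2 max_{|z| = r} |F z| / (1 - theta / r) for theta < r.
  Applied to u.xi_t with r of order ln (Lambda / (h t)) / h, a Chernoff bound and a finite net of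
  directions give P(|xi_t| > Lambda) \<le> K exp (C Lambda/h - (1 - eps) (Lambda/h) ln (Lambda/(h t)))
  uniformly in h and t.  Once Lambda/h and Lambda/(h T) are large, the constants C, K and the
  weight t^(-k) are absorbed into the slack delta.
*)
theory Submission
  imports Defs "HOL-Complex_Analysis.Complex_Analysis"
begin

section \<open>Backward differences of powers\<close>

lemma sum_alternating_binomial_Suc:
  fixes g :: "nat \<Rightarrow> 'a::comm_ring_1"
  shows "(\<Sum>j\<le>Suc n. (-1)^j * of_nat (Suc n choose j) * g j)
       = (\<Sum>j\<le>n. (-1)^j * of_nat (n choose j) * (g j - g (Suc j)))"
proof -
  have pascal: "(-1)^(Suc j) * of_nat (Suc n choose Suc j) * g (Suc j) =
       (-1)^(Suc j) * of_nat (n choose Suc j) * g (Suc j) - (-1)^j * of_nat (n choose j) * g (Suc j)" for j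
    by (simp add: algebra_simps)
  have "(\<Sum>j\<le>Suc n. (-1)^j * of_nat (Suc n choose j) * g j)
      = g 0 + (\<Sum>j\<le>n. (-1)^(Suc j) * of_nat (Suc n choose Suc j) * g (Suc j))"
    by (subst sum.atMost_Suc_shift) simp
  moreover have "(\<Sum>j\<le>n. (-1)^j * of_nat (n choose j) * g j)
      = (\<Sum>j\<le>Suc n. (-1)^j * of_nat (n choose j) * g j)"
    by (simp add: binomial_eq_0)
  moreover have "(\<Sum>j\<le>Suc n. (-1)^j * of_nat (n choose j) * g j)
      = g 0 + (\<Sum>j\<le>n. (-1)^(Suc j) * of_nat (n choose Suc j) * g (Suc j))"
    by (subst sum.atMost_Suc_shift) simp
  ultimately show ?thesis
    unfolding pascal sum_subtractf by (simp add: right_diff_distrib sum_subtractf algebra_simps)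
qed

definition backward_diff_power :: "nat \<Rightarrow> 'a::comm_ring_1 \<Rightarrow> nat \<Rightarrow> 'a" where
  "backward_diff_power n c k = (\<Sum>j\<le>n. (-1)^j * of_nat (n choose j) * (c - of_nat j)^k)"

lemma backward_diff_power_Suc:
  "backward_diff_power (Suc n) c k = (\<Sum>i<k. of_nat (k choose i) * backward_diff_power n (c - 1) i)"
proof -
  have step: "(c - of_nat j)^k - (c - of_nat (Suc j))^k
      = (\<Sum>i<k. of_nat (k choose i) * (c - 1 - of_nat j)^i)" for j
  proof -
    have "(c - of_nat j)^k = (\<Sum>i\<le>k. of_nat (k choose i) * (c - 1 - of_nat j)^i)"
      using binomial_ring[of "c - 1 - of_nat j" 1 k] by (simp add: mult.commute)
    also have "\<dots> = (\<Sum>i<k. of_nat (k choose i) * (c - 1 - of_nat j)^i) + (c - 1 - of_nat j)^k"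
      by (simp add: lessThan_Suc_atMost[symmetric])
    finally show ?thesis by (simp add: algebra_simps)
  qed
  have "backward_diff_power (Suc n) c k
      = (\<Sum>j\<le>n. \<Sum>i<k. (-1)^j * of_nat (n choose j) * (of_nat (k choose i) * (c - 1 - of_nat j)^i))"
    unfolding backward_diff_power_def sum_alternating_binomial_Suc step sum_distrib_left ..
  also have "\<dots> = (\<Sum>i<k. of_nat (k choose i) * backward_diff_power n (c - 1) i)"
    unfolding backward_diff_power_def by (subst sum.swap) (simp add: sum_distrib_left algebra_simps)
  finally show ?thesis .
qed

lemma backward_diff_power_less: "k < n \<Longrightarrow> backward_diff_power n c k = 0"
proof (induction n arbitrary: c k)
  case 0
  then show ?case by simp
next
  case (Suc n)
  then show ?case
    unfolding backward_diff_power_Suc by (intro sum.neutral) auto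
qed

lemma backward_diff_power_self: "backward_diff_power n c n = fact n"
proof (induction n arbitrary: c)
  case 0
  then show ?case by (simp add: backward_diff_power_def)
next
  case (Suc n)
  have "backward_diff_power (Suc n) c (Suc n) = of_nat (Suc n) * backward_diff_power n (c - 1) n"
    unfolding backward_diff_power_Suc by (simp add: lessThan_Suc backward_diff_power_less)
  then show ?case using Suc.IH by simp
qed

section \<open>Random variables with an entire characteristic function\<close>

definition taylor_coeff :: "(complex \<Rightarrow> complex) \<Rightarrow> nat \<Rightarrow> complex" where
  "taylor_coeff F k = (deriv ^^ k) F 0 / fact k"

lemma entire_taylor_sums:
  assumes "F holomorphic_on UNIV"
  shows "(\<lambda>k. taylor_coeff F k * w^k) sums F w"
proof -
  have "F holomorphic_on ball 0 (norm w + 1)"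
    using assms by (rule holomorphic_on_subset) auto
  from holomorphic_power_series[OF this, of w] show ?thesis
    by (simp add: taylor_coeff_def)
qed

lemma norm_taylor_coeff_le:
  assumes "F holomorphic_on UNIV" "r > 0" "\<And>z. norm z = r \<Longrightarrow> norm (F z) \<le> B"
  shows "norm (taylor_coeff F k) \<le> B / r^k"
proof -
  have "norm ((deriv ^^ k) F 0) \<le> fact k * B / r^k"
  proof (rule Cauchy_inequality)
    show "F holomorphic_on ball 0 r"
      using assms(1) by (rule holomorphic_on_subset) auto
    show "continuous_on (cball 0 r) F"
      using holomorphic_on_imp_continuous_on[OF assms(1)] by (rule continuous_on_subset) auto
  qed (use assms in auto)
  then show ?thesis by (simp add: taylor_coeff_def norm_divide field_simps)
qed

lemma entire_taylor_remainder_le: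
  assumes F: "F holomorphic_on UNIV" and B: "\<And>z. norm z = 1 \<Longrightarrow> norm (F z) \<le> B"
    and w: "norm w \<le> 1/2"
  shows "norm (F w - (\<Sum>k<N. taylor_coeff F k * w^k)) \<le> 2 * B * norm w ^ N"
proof -
  have B0: "0 \<le> B" using order_trans[OF norm_ge_zero B[of 1]] by simp
  have tail: "(\<lambda>i. taylor_coeff F (i + N) * w^(i + N)) sums (F w - (\<Sum>k<N. taylor_coeff F k * w^k))"
    using sums_split_initial_segment[OF entire_taylor_sums[OF F]] .
  have geom: "(\<lambda>i. B * norm w ^ N * norm w ^ i) sums (B * norm w ^ N * (1 / (1 - norm w)))"
    by (intro sums_mult geometric_sums) (use w in auto)
  have term_le: "norm (taylor_coeff F (i + N) * w^(i + N)) \<le> B * norm w ^ N * norm w ^ i" for i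
  proof -
    have "norm (taylor_coeff F (i + N)) \<le> B"
      using norm_taylor_coeff_le[OF F, of 1 B] B by simp
    then have "norm (taylor_coeff F (i + N)) * (norm w ^ N * norm w ^ i) \<le> B * (norm w ^ N * norm w ^ i)"
      by (rule mult_right_mono) simp
    then show ?thesis
      by (simp add: norm_mult norm_power power_add mult_ac)
  qed
  have summable_norm_tail: "summable (\<lambda>i. norm (taylor_coeff F (i + N) * w^(i + N)))"
    by (rule summable_comparison_test'[OF sums_summable[OF geom]]) (use term_le in auto)
  have "norm (F w - (\<Sum>k<N. taylor_coeff F k * w^k)) = norm (\<Sum>i. taylor_coeff F (i + N) * w^(i + N))"
    using tail by (simp add: sums_iff)
  also have "\<dots> \<le> (\<Sum>i. B * norm w ^ N * norm w ^ i)"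
    using summable_norm[OF summable_norm_tail] suminf_le[OF term_le summable_norm_tail sums_summable[OF geom]]
    by linarith
  also have "\<dots> = B * norm w ^ N * (1 / (1 - norm w))"
    using geom by (simp add: sums_iff)
  also have "\<dots> \<le> B * norm w ^ N * 2"
    using w B0 by (intro mult_left_mono) (auto simp: field_simps)
  finally show ?thesis by (simp add: mult_ac)
qed

definition central_diff :: "(complex \<Rightarrow> complex) \<Rightarrow> nat \<Rightarrow> real \<Rightarrow> complex" where
  "central_diff F m s = (\<Sum>j\<le>2*m. (-1)^j * of_nat (2*m choose j) * F (of_real ((real m - real j) * s)))"

lemma central_diff_polynomial:
  fixes c :: "nat \<Rightarrow> complex"
  shows "(\<Sum>j\<le>2*m. (-1)^j * of_nat (2*m choose j) * (\<Sum>k<Suc (2*m). c k * (of_real ((real m - real j) * s))^k))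
       = c (2*m) * fact (2*m) * of_real s ^ (2*m)"
proof -
  have "(of_real ((real m - real j) * s) :: complex)^k = (of_nat m - of_nat j)^k * of_real s ^ k" for j k
    by (simp add: power_mult_distrib)
  then have "(\<Sum>j\<le>2*m. (-1)^j * of_nat (2*m choose j) * (\<Sum>k<Suc (2*m). c k * (of_real ((real m - real j) * s))^k))
      = (\<Sum>k<Suc (2*m). c k * of_real s ^ k * backward_diff_power (2*m) (of_nat m) k)"
    unfolding backward_diff_power_def sum_distrib_left
    by (subst sum.swap) (simp add: mult_ac)
  also have "\<dots> = c (2*m) * fact (2*m) * of_real s ^ (2*m)"
    by (simp add: lessThan_Suc backward_diff_power_less backward_diff_power_self)
  finally show ?thesis .
qed

lemma central_diff_approx:
  assumes F: "F holomorphic_on UNIV" and B: "\<And>z. norm z = 1 \<Longrightarrow> norm (F z) \<le> B"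
    and s: "real m * \<bar>s\<bar> \<le> 1/2"
  shows "norm (central_diff F m s - taylor_coeff F (2*m) * fact (2*m) * of_real s ^ (2*m))
         \<le> 4^m * 2 * B * (real m * \<bar>s\<bar>)^(2*m+1)"
proof -
  define w where "w j = (of_real ((real m - real j) * s) :: complex)" for j
  define P where "P z = (\<Sum>k<Suc (2*m). taylor_coeff F k * z^k)" for z
  have B0: "0 \<le> B" using order_trans[OF norm_ge_zero B[of 1]] by simp
  have norm_w: "norm (w j) \<le> real m * \<bar>s\<bar>" if "j \<le> 2*m" for j
  proof -
    have "\<bar>real m - real j\<bar> \<le> real m" using that by linarith
    then show ?thesis unfolding w_def norm_of_real abs_mult by (intro mult_right_mono) auto
  qed
  have "central_diff F m s = (\<Sum>j\<le>2*m. (-1)^j * of_nat (2*m choose j) * P (w j))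
        + (\<Sum>j\<le>2*m. (-1)^j * of_nat (2*m choose j) * (F (w j) - P (w j)))"
    unfolding central_diff_def w_def[symmetric] by (simp add: sum.distrib[symmetric] algebra_simps)
  also have "(\<Sum>j\<le>2*m. (-1)^j * of_nat (2*m choose j) * P (w j))
      = taylor_coeff F (2*m) * fact (2*m) * of_real s ^ (2*m)"
    unfolding P_def w_def by (rule central_diff_polynomial)
  finally have "norm (central_diff F m s - taylor_coeff F (2*m) * fact (2*m) * of_real s ^ (2*m))
      = norm (\<Sum>j\<le>2*m. (-1)^j * of_nat (2*m choose j) * (F (w j) - P (w j)))" by simp
  also have "\<dots> \<le> (\<Sum>j\<le>2*m. real (2*m choose j) * (2 * B * (real m * \<bar>s\<bar>)^(2*m+1)))"
  proof (rule order_trans[OF norm_sum sum_mono])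
    fix j assume j: "j \<in> {..2*m}"
    have "norm (F (w j) - P (w j)) \<le> 2 * B * norm (w j) ^ Suc (2*m)"
      unfolding P_def by (rule entire_taylor_remainder_le[OF F B]) (use norm_w[of j] j s in auto)
    also have "\<dots> \<le> 2 * B * (real m * \<bar>s\<bar>)^(2*m+1)"
      using norm_w[of j] j B0 power_mono[of "norm (w j)" "real m * \<bar>s\<bar>" "Suc (2*m)"]
      by (intro mult_left_mono) auto
    finally show "norm ((-1)^j * of_nat (2*m choose j) * (F (w j) - P (w j)))
        \<le> real (2*m choose j) * (2 * B * (real m * \<bar>s\<bar>)^(2*m+1))"
      by (simp add: norm_mult norm_power mult_left_mono)
  qed
  also have "\<dots> = 4^m * 2 * B * (real m * \<bar>s\<bar>)^(2*m+1)"
    by (simp add: sum_distrib_right[symmetric] choose_row_sum power_mult flip: of_nat_sum)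
  finally show ?thesis .
qed

lemma two_minus_two_cos_power_eq:
  fixes y :: real
  shows "complex_of_real ((2 - 2*cos y)^m)
    = (-1)^m * (\<Sum>j\<le>2*m. (-1)^j * of_nat (2*m choose j) * exp (\<i> * of_real ((real m - real j) * y)))"
proof -
  define a where "a = exp (\<i> * of_real (y/2))"
  define b where "b = exp (- (\<i> * of_real (y/2)))"
  have ab: "a * b = 1" unfolding a_def b_def by (simp add: exp_minus)
  have a2: "a^2 = exp (\<i> * of_real y)" and b2: "b^2 = exp (-(\<i> * of_real y))"
    unfolding a_def b_def by (simp_all add: exp_of_nat_mult[symmetric] field_simps)
  have cos_ab: "complex_of_real (2 - 2*cos y) = - ((a - b)^2)"
  proof -
    have "complex_of_real (2 - 2*cos y) = 2 - (exp (\<i> * of_real y) + exp (-(\<i> * of_real y)))"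
      by (simp add: cos_of_real[symmetric] cos_exp_eq field_simps)
    also have "\<dots> = - ((a - b)^2)"
      unfolding power2_diff a2 b2 ab[unfolded mult.commute[of a]] by (simp add: mult.commute ab)
    finally show ?thesis .
  qed
  have binom_term: "(-b)^j * a^(2*m-j) = (-1)^j * exp (\<i> * of_real ((real m - real j) * y))"
    if "j \<le> 2*m" for j
  proof -
    have "of_nat j * (- (\<i> * of_real (y/2))) + of_nat (2*m-j) * (\<i> * of_real (y/2))
        = \<i> * complex_of_real ((real m - real j) * y)"
      using that by (simp add: of_nat_diff field_simps)
    then have "exp (of_nat j * (- (\<i> * of_real (y/2)))) * exp (of_nat (2*m-j) * (\<i> * of_real (y/2)))
        = exp (\<i> * of_real ((real m - real j) * y))"
      by (simp only: exp_add[symmetric])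
    then have "b^j * a^(2*m-j) = exp (\<i> * of_real ((real m - real j) * y))"
      unfolding a_def b_def exp_of_nat_mult by simp
    then show ?thesis
      by (simp add: power_minus[of b j])
  qed
  have "complex_of_real ((2 - 2*cos y)^m) = (- ((a - b)^2))^m"
    by (simp only: of_real_power cos_ab)
  also have "\<dots> = (-1)^m * ((-b) + a)^(2*m)"
    by (simp only: power_minus[of "(a-b)^2" m] power_mult) simp
  also have "\<dots> = (-1)^m * (\<Sum>j\<le>2*m. of_nat (2*m choose j) * ((-b)^j * a^(2*m-j)))"
    unfolding binomial_ring by (simp add: mult_ac)
  also have "\<dots> = (-1)^m * (\<Sum>j\<le>2*m. (-1)^j * of_nat (2*m choose j) * exp (\<i> * of_real ((real m - real j) * y)))"
    by (rule arg_cong[where f = "\<lambda>x. (-1)^m * x"], rule sum.cong[OF refl]) (simp add: binom_term)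
  finally show ?thesis .
qed

lemma nn_integral_two_minus_two_cos_power:
  assumes M: "prob_space M" and Y[measurable]: "Y \<in> borel_measurable M"
    and char: "\<And>s::real. (\<integral>\<omega>. exp (\<i> * of_real (s * Y \<omega>)) \<partial>M) = F (of_real s)"
  shows "(\<integral>\<^sup>+\<omega>. ennreal ((2 - 2*cos (s * Y \<omega>))^m) \<partial>M) = ennreal (norm (central_diff F m s))"
proof -
  interpret prob_space M by (rule M)
  have nonneg: "0 \<le> (2 - 2*cos (s * Y \<omega>))^m" for \<omega>
    using cos_le_one[of "s * Y \<omega>"] by simp
  have "\<bar>(2 - 2*cos (s * Y \<omega>))^m\<bar> \<le> 4^m" for \<omega>
  proof -
    have "\<bar>2 - 2*cos (s * Y \<omega>)\<bar> \<le> 4"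
      using cos_ge_minus_one[of "s * Y \<omega>"] cos_le_one[of "s * Y \<omega>"] by linarith
    then show ?thesis unfolding power_abs by (intro power_mono) auto
  qed
  then have int: "integrable M (\<lambda>\<omega>. (2 - 2*cos (s * Y \<omega>))^m)"
    by (intro integrable_const_bound[of _ "4^m"]) auto
  have "complex_of_real (\<integral>\<omega>. (2 - 2*cos (s * Y \<omega>))^m \<partial>M)
      = (\<integral>\<omega>. (-1)^m * (\<Sum>j\<le>2*m. (-1)^j * of_nat (2*m choose j)
            * exp (\<i> * of_real (((real m - real j) * s) * Y \<omega>))) \<partial>M)"
    unfolding integral_complex_of_real[symmetric] two_minus_two_cos_power_eq by (simp add: mult.assoc)
  also have "\<dots> = (-1)^m * (\<Sum>j\<le>2*m. (-1)^j * of_nat (2*m choose j)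
            * (\<integral>\<omega>. exp (\<i> * of_real (((real m - real j) * s) * Y \<omega>)) \<partial>M))"
    by (simp add: integrable_iexp integral_sum integral_mult_right_zero)
  also have "\<dots> = (-1)^m * central_diff F m s"
    unfolding central_diff_def char ..
  finally have "norm (complex_of_real (\<integral>\<omega>. (2 - 2*cos (s * Y \<omega>))^m \<partial>M)) = norm (central_diff F m s)"
    by (simp add: norm_mult norm_power)
  then have "(\<integral>\<omega>. (2 - 2*cos (s * Y \<omega>))^m \<partial>M) = norm (central_diff F m s)"
    using integral_nonneg_AE[OF AE_I2[OF nonneg]] by simp
  then show ?thesis
    using nn_integral_eq_integral[OF int AE_I2[OF nonneg]] by simp
qed

lemma two_minus_two_cos_div_square:
  fixes s y :: real
  assumes "s \<noteq> 0"
  shows "(2 - 2 * cos (s * y)) / s^2 = y^2 * (sinc (s * y / 2))^2"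
proof (cases "y = 0")
  case False
  then have "s * y / 2 \<noteq> 0" using assms by simp
  moreover have "2 - 2 * cos (s * y) = 4 * (sin (s * y / 2))^2"
    using cos_double_sin[of "s * y / 2"] by simp
  ultimately show ?thesis using assms False by (simp add: field_simps power2_eq_square)
qed simp

lemma norm_central_diff_le:
  assumes F: "F holomorphic_on UNIV"
    and r: "r > 0" and B: "\<And>z. norm z = r \<Longrightarrow> norm (F z) \<le> B"
  obtains C where "\<And>s. 0 < s \<Longrightarrow> real m * s \<le> 1/2 \<Longrightarrow>
    norm (central_diff F m s) \<le> (fact (2*m) * B / r^(2*m) + C * s) * s^(2*m)"
proof -
  have "compact (F ` sphere 0 1)"
    using holomorphic_on_imp_continuous_on[OF F]
    by (intro compact_continuous_image) (auto intro: continuous_on_subset)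
  then obtain B1 where B1: "\<And>z. norm z = 1 \<Longrightarrow> norm (F z) \<le> B1"
    by (fastforce dest: compact_imp_bounded simp: bounded_iff)
  show ?thesis
  proof
    fix s :: real assume s: "0 < s" "real m * s \<le> 1/2"
    have "norm (central_diff F m s)
        \<le> norm (taylor_coeff F (2*m) * fact (2*m) * of_real s ^ (2*m)) + 4^m * 2 * B1 * (real m * s)^(2*m+1)"
      using central_diff_approx[OF F B1, of m s] s norm_triangle_ineq2 by (smt (verit) abs_of_pos)
    also have "\<dots> \<le> B / r^(2*m) * fact (2*m) * s^(2*m) + 4^m * 2 * B1 * (real m * s)^(2*m+1)"
      using mult_right_mono[OF norm_taylor_coeff_le[OF F r B], of "fact (2*m) * s^(2*m)" "2*m"] s
      by (simp add: norm_mult norm_power mult_ac)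
    finally show "norm (central_diff F m s)
        \<le> (fact (2*m) * B / r^(2*m) + (4^m * 2 * B1 * real m ^ (2*m+1)) * s) * s^(2*m)"
      by (simp add: power_mult_distrib algebra_simps)
  qed
qed

lemma even_moment_le:
  assumes M: "prob_space M" and Y[measurable]: "Y \<in> borel_measurable M"
    and char: "\<And>s::real. (\<integral>\<omega>. exp (\<i> * of_real (s * Y \<omega>)) \<partial>M) = F (of_real s)"
    and F: "F holomorphic_on UNIV"
    and r: "r > 0" and B: "\<And>z. norm z = r \<Longrightarrow> norm (F z) \<le> B"
  shows "(\<integral>\<^sup>+\<omega>. ennreal (Y \<omega> ^ (2*m)) \<partial>M) \<le> ennreal (fact (2*m) * B / r^(2*m))"
proof -
  obtain C where C: "\<And>s. 0 < s \<Longrightarrow> real m * s \<le> 1/2 \<Longrightarrow>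
      norm (central_diff F m s) \<le> (fact (2*m) * B / r^(2*m) + C * s) * s^(2*m)"
    using norm_central_diff_le[OF F r B] by blast
  define s where "s j = 1 / real (j + (2*m+2))" for j
  have s_pos: "s j > 0" for j unfolding s_def by simp
  have s_small: "real m * s j \<le> 1/2" for j unfolding s_def by (simp add: field_simps)
  have s_lim: "s \<longlonglongrightarrow> 0"
    unfolding s_def using LIMSEQ_ignore_initial_segment[OF lim_1_over_n, of "2*m+2"] by simp
  \<comment> \<open>f j tends to Y^(2m), and its integral is bounded via Cauchy's estimate for F^(2m)(0); Fatou's lemma concludes.\<close>
  define f where "f j \<omega> = ennreal (((2 - 2 * cos (s j * Y \<omega>)) / s j ^ 2) ^ m)" for j \<omega>
  have f_lim: "(\<lambda>j. f j \<omega>) \<longlonglongrightarrow> ennreal (Y \<omega> ^ (2*m))" for \<omega>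
  proof -
    have "(\<lambda>j. sinc (s j * Y \<omega> / 2)) \<longlonglongrightarrow> sinc (0 * Y \<omega> / 2)"
      by (intro isCont_tendsto_compose[OF isCont_sinc] tendsto_intros s_lim) simp
    then have "(\<lambda>j. (Y \<omega> ^ 2 * (sinc (s j * Y \<omega> / 2))^2) ^ m) \<longlonglongrightarrow> (Y \<omega> ^ 2 * 1 ^ 2) ^ m"
      by (intro tendsto_intros) simp
    moreover have "f j \<omega> = ennreal ((Y \<omega> ^ 2 * (sinc (s j * Y \<omega> / 2))^2) ^ m)" for j
      unfolding f_def using two_minus_two_cos_div_square[of "s j" "Y \<omega>"] s_pos[of j] by simp
    ultimately show ?thesis by (simp add: power_mult)
  qed
  have f_integral: "integral\<^sup>N M (f j) \<le> ennreal (fact (2*m) * B / r^(2*m) + C * s j)" for j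
  proof -
    have "integral\<^sup>N M (f j) = (\<integral>\<^sup>+\<omega>. ennreal ((2 - 2*cos (s j * Y \<omega>))^m) * ennreal (1 / s j ^ (2*m)) \<partial>M)"
      unfolding f_def using s_pos[of j]
      by (intro nn_integral_cong)
         (simp add: ennreal_mult[symmetric] power_divide power_mult[symmetric] mult.commute)
    also have "\<dots> = (\<integral>\<^sup>+\<omega>. ennreal ((2 - 2*cos (s j * Y \<omega>))^m) \<partial>M) * ennreal (1 / s j ^ (2*m))"
      by (rule nn_integral_multc) simp
    also have "\<dots> = ennreal (norm (central_diff F m (s j)) / s j ^ (2*m))"
      unfolding nn_integral_two_minus_two_cos_power[OF M Y char] using s_pos[of j]
      by (simp flip: ennreal_mult)
    also have "\<dots> \<le> ennreal (fact (2*m) * B / r^(2*m) + C * s j)"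
      using C[OF s_pos s_small, of j] s_pos[of j] by (intro ennreal_leI) (simp add: divide_le_eq)
    finally show ?thesis .
  qed
  have "(\<integral>\<^sup>+\<omega>. ennreal (Y \<omega> ^ (2*m)) \<partial>M) = (\<integral>\<^sup>+\<omega>. liminf (\<lambda>j. f j \<omega>) \<partial>M)"
    by (intro nn_integral_cong) (simp add: lim_imp_Liminf[OF _ f_lim])
  also have "\<dots> \<le> liminf (\<lambda>j. integral\<^sup>N M (f j))"
    by (rule nn_integral_liminf) (simp add: f_def)
  also have "\<dots> \<le> liminf (\<lambda>j. ennreal (fact (2*m) * B / r^(2*m) + C * s j))"
    by (intro Liminf_mono) (simp add: f_integral)
  also have "\<dots> = ennreal (fact (2*m) * B / r^(2*m))"
  proof (rule lim_imp_Liminf)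
    have "(\<lambda>j. fact (2*m) * B / r^(2*m) + C * s j) \<longlonglongrightarrow> fact (2*m) * B / r^(2*m) + C * 0"
      by (intro tendsto_intros s_lim)
    then show "(\<lambda>j. ennreal (fact (2*m) * B / r^(2*m) + C * s j)) \<longlonglongrightarrow> ennreal (fact (2*m) * B / r^(2*m))"
      by (intro tendsto_ennrealI) simp
  qed simp
  finally show ?thesis .
qed

lemma exp_moment_le:
  assumes M: "prob_space M" and Y[measurable]: "Y \<in> borel_measurable M"
    and char: "\<And>s::real. (\<integral>\<omega>. exp (\<i> * of_real (s * Y \<omega>)) \<partial>M) = F (of_real s)"
    and F: "F holomorphic_on UNIV"
    and r: "r > 0" and B: "\<And>z. norm z = r \<Longrightarrow> norm (F z) \<le> B"
    and \<theta>: "0 < \<theta>" "\<theta> < r"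
  shows "(\<integral>\<^sup>+\<omega>. ennreal (exp (\<theta> * Y \<omega>)) \<partial>M) \<le> ennreal (2 * B / (1 - \<theta> / r))"
proof -
  have B0: "0 \<le> B" using order_trans[OF norm_ge_zero B[of "of_real r"]] r by simp
  \<comment> \<open>exp x \<le> 2 cosh x, and the Taylor series of cosh involves only the even moments.\<close>
  define a where "a n \<omega> = (if even n then (\<theta> * Y \<omega>)^n / fact n else 0)" for n \<omega>
  have a_nonneg: "0 \<le> a n \<omega>" for n \<omega>
    unfolding a_def by (auto simp: zero_le_even_power)
  have a_sums: "(\<lambda>n. 2 * a n \<omega>) sums (2 * cosh (\<theta> * Y \<omega>))" for \<omega>
  proof -
    have "(\<lambda>n. if even n then (\<theta> * Y \<omega>) ^ n /\<^sub>R fact n else 0) = (\<lambda>n. a n \<omega>)"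
      unfolding a_def by (intro ext) (simp add: divide_inverse_commute)
    then show ?thesis using cosh_converges[of "\<theta> * Y \<omega>"] by (intro sums_mult) simp
  qed
  have q: "0 \<le> \<theta> / r" "\<theta> / r < 1" using \<theta> r by auto
  have geom: "(\<lambda>n. 2 * B * (\<theta> / r)^n) sums (2 * B / (1 - \<theta> / r))"
    using sums_mult[OF geometric_sums[of "\<theta> / r"], of "2 * B"] q by simp
  have a_integral: "integral\<^sup>N M (\<lambda>\<omega>. ennreal (2 * a n \<omega>)) \<le> ennreal (2 * B * (\<theta> / r)^n)" for n
  proof (cases "even n")
    case True
    then obtain m where n: "n = 2*m" by blast
    have "integral\<^sup>N M (\<lambda>\<omega>. ennreal (2 * a n \<omega>))
        = ennreal (2 * \<theta>^n / fact n) * (\<integral>\<^sup>+\<omega>. ennreal (Y \<omega> ^ (2*m)) \<partial>M)"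
      unfolding a_def using True n
      by (subst nn_integral_cmult[symmetric])
         (simp_all add: ennreal_mult[symmetric] power_mult_distrib zero_le_even_power mult_ac)
    also have "\<dots> \<le> ennreal (2 * \<theta>^n / fact n) * ennreal (fact (2*m) * B / r^(2*m))"
      by (rule mult_left_mono[OF even_moment_le[OF M Y char F r B] zero_le])
    also have "\<dots> = ennreal (2 * B * (\<theta> / r)^n)"
      using \<theta> B0 n by (simp add: ennreal_mult[symmetric] power_divide field_simps)
    finally show ?thesis .
  qed (simp add: a_def)
  have "(\<integral>\<^sup>+\<omega>. ennreal (exp (\<theta> * Y \<omega>)) \<partial>M) \<le> (\<integral>\<^sup>+\<omega>. ennreal (2 * cosh (\<theta> * Y \<omega>)) \<partial>M)"
    by (intro nn_integral_mono ennreal_leI) (simp add: cosh_def add_increasing2)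
  also have "\<dots> = (\<integral>\<^sup>+\<omega>. (\<Sum>n. ennreal (2 * a n \<omega>)) \<partial>M)"
    using a_sums a_nonneg
    by (intro nn_integral_cong) (simp add: suminf_ennreal2 sums_iff)
  also have "\<dots> = (\<Sum>n. integral\<^sup>N M (\<lambda>\<omega>. ennreal (2 * a n \<omega>)))"
    by (rule nn_integral_suminf) (simp add: a_def)
  also have "\<dots> \<le> (\<Sum>n. ennreal (2 * B * (\<theta> / r)^n))"
    by (intro suminf_le a_integral) auto
  also have "\<dots> = ennreal (2 * B / (1 - \<theta> / r))"
    using geom B0 q by (simp add: suminf_ennreal2 sums_iff)
  finally show ?thesis .
qed

lemma prob_gt_le_of_entire_char:
  assumes M: "prob_space M" and Y[measurable]: "Y \<in> borel_measurable M"
    and char: "\<And>s::real. (\<integral>\<omega>. exp (\<i> * of_real (s * Y \<omega>)) \<partial>M) = F (of_real s)"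
    and F: "F holomorphic_on UNIV"
    and r: "r > 0" and B: "\<And>z. norm z = r \<Longrightarrow> norm (F z) \<le> B"
    and \<theta>: "0 < \<theta>" "\<theta> < r"
  shows "measure M {\<omega> \<in> space M. Y \<omega> > a} \<le> exp (- \<theta> * a) * (2 * B / (1 - \<theta> / r))"
proof -
  interpret prob_space M by (rule M)
  have B0: "0 \<le> B" using order_trans[OF norm_ge_zero B[of "of_real r"]] r by simp
  have "emeasure M {\<omega> \<in> space M. Y \<omega> > a} \<le> emeasure M {\<omega> \<in> space M. Y \<omega> \<ge> a}"
    by (intro emeasure_mono) auto
  also have "\<dots> \<le> ennreal (exp (- \<theta> * a)) * (\<integral>\<^sup>+\<omega>. ennreal (exp (\<theta> * Y \<omega>)) * indicator (space M) \<omega> \<partial>M)"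
    by (rule Chernoff_ineq_nn_integral_ge[OF \<theta>(1)]) simp_all
  also have "(\<integral>\<^sup>+\<omega>. ennreal (exp (\<theta> * Y \<omega>)) * indicator (space M) \<omega> \<partial>M)
      = (\<integral>\<^sup>+\<omega>. ennreal (exp (\<theta> * Y \<omega>)) \<partial>M)"
    by (intro nn_integral_cong) simp
  also have "ennreal (exp (- \<theta> * a)) * \<dots> \<le> ennreal (exp (- \<theta> * a)) * ennreal (2 * B / (1 - \<theta> / r))"
    by (rule mult_left_mono[OF exp_moment_le[OF M Y char F r B \<theta>] zero_le])
  finally show ?thesis
    using \<theta> r B0 by (simp add: emeasure_eq_measure measure_nonneg flip: ennreal_mult)
qed

section \<open>The truncated Levy exponent along a line\<close>

definition levy_integrand :: "real^'n \<Rightarrow> complex \<Rightarrow> real^'n \<Rightarrow> complex" where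
  "levy_integrand u z y = exp (\<i> * (z * of_real (u \<bullet> y))) - 1
     - \<i> * (z * of_real (u \<bullet> y)) * of_real (indicator (cball 0 1) y)"

definition levy_coeff :: "real^'n \<Rightarrow> nat \<Rightarrow> real^'n \<Rightarrow> complex" where
  "levy_coeff u k y = (\<i> * of_real (u \<bullet> y))^k / fact k
     * of_real (if k = 0 then 0 else if k = 1 then 1 - indicator (cball 0 1) y else 1)"

lemma levy_integrand_sums: "(\<lambda>k. levy_coeff u k y * z^k) sums levy_integrand u z y"
proof -
  define e where "e k = (\<i> * (z * of_real (u \<bullet> y)))^k /\<^sub>R fact k" for k
  define c where "c = complex_of_real (indicator (cball 0 1) y)"
  have "(\<lambda>k. e k - (if k = 0 then e 0 else 0) - (if k = 1 then e 1 * c else 0))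
      sums (exp (\<i> * (z * of_real (u \<bullet> y))) - e 0 - e 1 * c)"
    unfolding e_def by (intro sums_diff exp_converges sums_single)
  moreover have "e k - (if k = 0 then e 0 else 0) - (if k = 1 then e 1 * c else 0)
      = levy_coeff u k y * z^k" for k
    unfolding e_def levy_coeff_def c_def
    by (cases "k = 0"; cases "k = 1") (simp_all add: power_mult_distrib scaleR_conv_of_real field_simps)
  ultimately show ?thesis
    by (simp add: levy_integrand_def e_def c_def)
qed

lemma norm_levy_coeff_le:
  assumes u: "norm u \<le> 1" and y: "norm y \<le> h" and h: "h \<ge> 1"
  shows "norm (levy_coeff u k y) \<le> h^k / fact k * min 1 ((norm y)\<^sup>2)"
proof -
  have uy: "\<bar>u \<bullet> y\<bar> \<le> norm y"
    using Cauchy_Schwarz_ineq2[of u y] u mult_right_mono[OF u norm_ge_zero[of y]] by simp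
  have "\<bar>u \<bullet> y\<bar>^k * (if k = 0 then 0 else if k = 1 then 1 - indicator (cball 0 1) y else 1)
      \<le> h^k * min 1 ((norm y)\<^sup>2)"
  proof (cases "norm y \<le> 1")
    case True
    have "\<bar>u \<bullet> y\<bar>^k \<le> (norm y)\<^sup>2" if "k \<ge> 2"
      using power_mono[OF uy abs_ge_zero, of k] power_decreasing[OF that, of "norm y"] True
      by (meson norm_ge_zero order_trans)
    moreover have "(norm y)\<^sup>2 \<le> h^k * (norm y)\<^sup>2"
      using h one_le_power[of h k] by (simp add: mult_le_cancel_right1)
    moreover have "(norm y)\<^sup>2 \<le> 1"
      using True by (simp add: power_le_one)
    ultimately show ?thesis
      using True h by (auto simp: not_less_eq_eq numeral_2_eq_2)
  next
    case False
    have "\<bar>u \<bullet> y\<bar>^k \<le> h^k"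
      using uy y by (intro power_mono) auto
    then show ?thesis
      using False h by (auto simp: min_def abs_le_square_iff)
  qed
  then show ?thesis
    unfolding levy_coeff_def
    by (simp add: norm_mult norm_power norm_divide divide_right_mono mult.commute[of "inverse _"] field_simps)
qed

lemma exp_real_sums: "(\<lambda>k. x^k / fact k) sums exp (x::real)"
  using exp_converges[of x] by (simp add: divide_inverse_commute)

lemma integrable_levy_weight:
  assumes "levy_measure nu"
  shows "integrable nu (\<lambda>y. min 1 ((norm y)\<^sup>2))"
proof (rule integrableI_bounded)
  have "sets nu = sets borel" using assms by (simp add: levy_measure_def)
  then show "(\<lambda>y. min 1 ((norm y)\<^sup>2)) \<in> borel_measurable nu"
    by (subst measurable_cong_sets) auto
  have "(\<integral>\<^sup>+ y. ennreal (norm (min 1 ((norm y)\<^sup>2))) \<partial>nu) = (\<integral>\<^sup>+ y. ennreal (min 1 ((norm y)\<^sup>2)) \<partial>nu)"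
    by (intro nn_integral_cong) simp
  then show "(\<integral>\<^sup>+ y. ennreal (norm (min 1 ((norm y)\<^sup>2))) \<partial>nu) < \<infinity>"
    using assms by (simp add: levy_measure_def)
qed

lemma cball_in_borel[measurable]: "cball (0::real^'n) r \<in> sets borel"
  by (simp add: borel_closed)

lemma integrable_levy_coeff:
  fixes nu :: "(real^'n) measure"
  assumes L: "levy_measure nu" and u: "norm u \<le> 1" and h: "h \<ge> 1"
  shows "integrable nu (\<lambda>y. indicator (cball 0 h) y * levy_coeff u k y)"
    and "norm (\<integral>y. indicator (cball 0 h) y * levy_coeff u k y \<partial>nu)
           \<le> h^k / fact k * (\<integral>y. min 1 ((norm y)\<^sup>2) \<partial>nu)"
proof -
  have sets: "sets nu = sets borel" using L by (simp add: levy_measure_def)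
  have bound: "norm (indicator (cball 0 h) y * levy_coeff u k y) \<le> h^k / fact k * min 1 ((norm y)\<^sup>2)"
    for y
    using norm_levy_coeff_le[OF u _ h, of y k] h by (auto simp: indicator_def)
  have bound_int: "integrable nu (\<lambda>y. h^k / fact k * min 1 ((norm y)\<^sup>2))"
    using integrable_levy_weight[OF L] by simp
  show int: "integrable nu (\<lambda>y. indicator (cball 0 h) y * levy_coeff u k y)"
  proof (rule Bochner_Integration.integrable_bound[OF bound_int])
    show "(\<lambda>y. indicator (cball 0 h) y * levy_coeff u k y) \<in> borel_measurable nu"
      unfolding levy_coeff_def measurable_cong_sets[OF sets refl] by measurable
    show "AE y in nu. norm (indicator (cball 0 h) y * levy_coeff u k y)
        \<le> norm (h^k / fact k * min 1 ((norm y)\<^sup>2))"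
      by (intro AE_I2 order_trans[OF bound]) (simp add: divide_right_mono)
  qed
  have "norm (\<integral>y. indicator (cball 0 h) y * levy_coeff u k y \<partial>nu)
      \<le> (\<integral>y. h^k / fact k * min 1 ((norm y)\<^sup>2) \<partial>nu)"
    by (rule Bochner_Integration.integral_norm_bound_integral[OF int bound_int bound])
  then show "norm (\<integral>y. indicator (cball 0 h) y * levy_coeff u k y \<partial>nu)
      \<le> h^k / fact k * (\<integral>y. min 1 ((norm y)\<^sup>2) \<partial>nu)"
    by simp
qed

lemma integral_density_cball_levy_integrand:
  fixes nu :: "(real^'n) measure"
  assumes "levy_measure nu"
  shows "integral\<^sup>L (density nu (indicator (cball 0 h))) (levy_integrand u z)
       = (\<integral>y. indicator (cball 0 h) y * levy_integrand u z y \<partial>nu)"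
proof -
  have sets: "sets nu = sets borel" using assms by (simp add: levy_measure_def)
  have "levy_integrand u z \<in> borel_measurable nu"
    unfolding levy_integrand_def measurable_cong_sets[OF sets refl] by measurable
  moreover have "density nu (indicator (cball 0 h)) = density nu (\<lambda>y. ennreal (indicator (cball 0 h) y))"
    by (simp add: ennreal_indicator)
  ultimately have "integral\<^sup>L (density nu (indicator (cball 0 h))) (levy_integrand u z)
      = (\<integral>y. of_real (indicator (cball 0 h) y) * levy_integrand u z y \<partial>nu)"
    using sets by (simp add: integral_density measurable_cong_sets[OF sets refl] scaleR_conv_of_real)
  also have "\<dots> = (\<integral>y. indicator (cball 0 h) y * levy_integrand u z y \<partial>nu)"
    by (intro Bochner_Integration.integral_cong) (auto simp: indicator_def)
  finally show ?thesis .
qed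

lemma levy_integrand_integral_sums:
  fixes nu :: "(real^'n) measure"
  assumes L: "levy_measure nu" and u: "norm u \<le> 1" and h: "h \<ge> 1"
  shows "(\<lambda>k. (\<integral>y. indicator (cball 0 h) y * levy_coeff u k y \<partial>nu) * z^k)
           sums integral\<^sup>L (density nu (indicator (cball 0 h))) (levy_integrand u z)"
proof -
  define V where "V = (\<integral>y. min 1 ((norm y)\<^sup>2) \<partial>nu)"
  define f where "f k = (\<lambda>y. indicator (cball 0 h) y * levy_coeff u k y * z^k)" for k
  have exp_sums: "(\<lambda>k. (h * norm z)^k / fact k * c) sums (exp (h * norm z) * c)" for c
    by (intro sums_mult2 exp_real_sums)
  have f_int: "integrable nu (f k)" for k
    unfolding f_def using integrable_levy_coeff(1)[OF L u h] by simp
  have f_norm: "norm (f k y) \<le> (h * norm z)^k / fact k * min 1 ((norm y)\<^sup>2)" for k y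
    using mult_right_mono[OF norm_levy_coeff_le[OF u _ h, of y k] norm_ge_zero[of "z^k"]] h
    by (auto simp: f_def indicator_def norm_mult norm_power power_mult_distrib field_simps)
  have f_integral_norm: "(\<integral>y. norm (f k y) \<partial>nu) \<le> (h * norm z)^k / fact k * V" for k
    using integral_mono[OF integrable_norm[OF f_int] _ f_norm, of k] integrable_levy_weight[OF L]
    by (simp add: V_def)
  have "(\<lambda>k. integral\<^sup>L nu (f k)) sums (\<integral>y. (\<Sum>k. f k y) \<partial>nu)"
  proof (rule sums_integral[OF f_int])
    show "AE y in nu. summable (\<lambda>k. norm (f k y))"
      using f_norm by (intro AE_I2 summable_comparison_test'[OF sums_summable[OF exp_sums]]) auto
    show "summable (\<lambda>k. \<integral>y. norm (f k y) \<partial>nu)"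
      using f_integral_norm by (intro summable_comparison_test'[OF sums_summable[OF exp_sums]]) auto
  qed
  moreover have "(\<Sum>k. f k y) = indicator (cball 0 h) y * levy_integrand u z y" for y
    using sums_mult[OF levy_integrand_sums, of "indicator (cball 0 h) y" u y z]
    by (simp add: f_def sums_iff mult.assoc)
  ultimately show ?thesis
    by (simp add: f_def integral_density_cball_levy_integrand[OF L] integral_mult_left_zero)
qed

definition line_exponent ::
  "real^'n^'n \<Rightarrow> real^'n \<Rightarrow> (real^'n) measure \<Rightarrow> real \<Rightarrow> real^'n \<Rightarrow> complex \<Rightarrow> complex" where
  "line_exponent S G nu h u z = - (z^2 * of_real ((u \<bullet> (S *v u)) / 2)) + \<i> * z * of_real (u \<bullet> G)
     + integral\<^sup>L (density nu (indicator (cball 0 h))) (levy_integrand u z)"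

definition line_exponent_majorant ::
  "real^'n^'n \<Rightarrow> real^'n \<Rightarrow> (real^'n) measure \<Rightarrow> real \<Rightarrow> real^'n \<Rightarrow> real \<Rightarrow> real" where
  "line_exponent_majorant S G nu h u r = r^2 * \<bar>u \<bullet> (S *v u)\<bar> + r * \<bar>u \<bullet> G\<bar>
     + exp (h * r) * (\<integral>y. min 1 ((norm y)\<^sup>2) \<partial>nu)"

lemma levy_exponent_eq_line_exponent:
  "levy_exponent S (density nu (indicator (cball 0 h))) G (s *\<^sub>R u) = line_exponent S G nu h u (of_real s)"
proof -
  have "(\<lambda>y. exp (\<i> * complex_of_real ((s *\<^sub>R u) \<bullet> y)) - 1
          - \<i> * complex_of_real ((s *\<^sub>R u) \<bullet> y) * complex_of_real (indicator (cball 0 1) y))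
      = levy_integrand u (of_real s)"
    unfolding levy_integrand_def by (intro ext) simp
  then show ?thesis
    unfolding levy_exponent_def line_exponent_def
    by (simp add: matrix_vector_mult_scaleR power2_eq_square)
qed

lemma line_exponent_holomorphic:
  fixes nu :: "(real^'n) measure"
  assumes "levy_measure nu" and "norm u \<le> 1" and "h \<ge> 1"
  shows "line_exponent S G nu h u holomorphic_on UNIV"
proof -
  define J where "J z = integral\<^sup>L (density nu (indicator (cball 0 h))) (levy_integrand u z)" for z
  have "J holomorphic_on ball 0 R" for R
    unfolding J_def using levy_integrand_integral_sums[OF assms] by (intro power_series_holomorphic) simp
  then have "\<exists>J'. (J has_field_derivative J') (at z)" for z
    using holomorphic_on_open[of "ball 0 (norm z + 1)" J] by auto
  then have "J holomorphic_on UNIV"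
    by (simp add: holomorphic_on_open)
  then show ?thesis
    unfolding line_exponent_def[abs_def] J_def by (intro holomorphic_intros)
qed

lemma norm_line_exponent_le:
  fixes nu :: "(real^'n) measure"
  assumes L: "levy_measure nu" and u: "norm u \<le> 1" and h: "h \<ge> 1"
  shows "norm (line_exponent S G nu h u z) \<le> line_exponent_majorant S G nu h u (norm z)"
proof -
  have "norm (integral\<^sup>L (density nu (indicator (cball 0 h))) (levy_integrand u z))
      \<le> exp (h * norm z) * (\<integral>y. min 1 ((norm y)\<^sup>2) \<partial>nu)"
  proof (rule norm_sums_le[OF levy_integrand_integral_sums[OF L u h] sums_mult2[OF exp_real_sums]])
    fix k
    show "norm ((\<integral>y. indicator (cball 0 h) y * levy_coeff u k y \<partial>nu) * z^k)
        \<le> (h * norm z)^k / fact k * (\<integral>y. min 1 ((norm y)\<^sup>2) \<partial>nu)"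
      using mult_right_mono[OF integrable_levy_coeff(2)[OF L u h, of k] norm_ge_zero[of "z^k"]]
      by (simp add: norm_mult norm_power power_mult_distrib field_simps)
  qed
  moreover have "norm (- (z^2 * of_real ((u \<bullet> (S *v u)) / 2))) \<le> norm z ^ 2 * \<bar>u \<bullet> (S *v u)\<bar>"
    by (simp add: norm_mult norm_power mult_left_mono)
  moreover have "norm (\<i> * z * of_real (u \<bullet> G)) = norm z * \<bar>u \<bullet> G\<bar>"
    by (simp add: norm_mult)
  moreover have "norm (line_exponent S G nu h u z)
      \<le> norm (- (z^2 * of_real ((u \<bullet> (S *v u)) / 2))) + norm (\<i> * z * of_real (u \<bullet> G))
        + norm (integral\<^sup>L (density nu (indicator (cball 0 h))) (levy_integrand u z))"
    unfolding line_exponent_def by (meson norm_triangle_le norm_triangle_ineq add_mono order_trans order_refl)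
  ultimately show ?thesis
    unfolding line_exponent_majorant_def by linarith
qed

section \<open>Tail bounds for Levy processes with truncated jumps\<close>

lemma levy_inner_tail_le:
  fixes M :: "'a measure" and X :: "real \<Rightarrow> 'a \<Rightarrow> real^'n" and nu :: "(real^'n) measure"
  assumes X: "levy_process M X S (density nu (indicator (cball 0 h))) G"
    and L: "levy_measure nu" and h: "h \<ge> 1" and u: "norm u \<le> 1" and t: "t \<ge> 0"
    and r: "r > 0" and \<theta>: "0 < \<theta>" "\<theta> < r"
  shows "measure M {\<omega> \<in> space M. u \<bullet> X t \<omega> > a}
           \<le> exp (- \<theta> * a) * (2 * exp (t * line_exponent_majorant S G nu h u r) / (1 - \<theta> / r))"
proof -
  have M: "prob_space M" and [measurable]: "X t \<in> borel_measurable M"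
    and char: "\<And>l. (\<integral>\<omega>. exp (\<i> * complex_of_real (l \<bullet> X t \<omega>)) \<partial>M)
                   = exp (complex_of_real t * levy_exponent S (density nu (indicator (cball 0 h))) G l)"
    using X t by (simp_all add: levy_process_def)
  define F where "F z = exp (of_real t * line_exponent S G nu h u z)" for z
  have "F holomorphic_on UNIV"
    unfolding F_def[abs_def] using line_exponent_holomorphic[OF L u h] by (intro holomorphic_intros)
  moreover have "(\<integral>\<omega>. exp (\<i> * of_real (s * (u \<bullet> X t \<omega>))) \<partial>M) = F (of_real s)" for s
    using char[of "s *\<^sub>R u"] by (simp add: F_def levy_exponent_eq_line_exponent)
  moreover have "norm (F z) \<le> exp (t * line_exponent_majorant S G nu h u r)" if "norm z = r" for z
  proof -
    have "Re (line_exponent S G nu h u z) \<le> line_exponent_majorant S G nu h u r"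
      using complex_Re_le_cmod norm_line_exponent_le[OF L u h, of S G z] that by (metis order_trans)
    then show ?thesis
      using t by (simp add: F_def mult_left_mono)
  qed
  ultimately show ?thesis
    using prob_gt_le_of_entire_char[OF M, of "\<lambda>\<omega>. u \<bullet> X t \<omega>" F r] r \<theta> by simp
qed

lemma finite_direction_net:
  fixes \<epsilon> :: real
  assumes "0 < \<epsilon>"
  obtains N :: "'a::euclidean_space set" where "finite N" "N \<subseteq> sphere 0 1"
    "\<And>x. \<exists>u\<in>N. u \<bullet> x \<ge> (1 - \<epsilon>) * norm x"
proof -
  have cover: "sphere (0::'a) 1 \<subseteq> (\<Union>c\<in>sphere 0 1. ball c \<epsilon>)"
    using assms by force
  obtain N where N: "N \<subseteq> sphere (0::'a) 1" "finite N" "sphere 0 1 \<subseteq> (\<Union>c\<in>N. ball c \<epsilon>)"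
    by (rule compactE_image[OF compact_sphere _ cover]) simp
  have "\<exists>u\<in>N. u \<bullet> x \<ge> (1 - \<epsilon>) * norm x" for x :: 'a
  proof (cases "x = 0")
    case True
    obtain v :: 'a where "norm v = 1" using vector_choose_size[of 1] by auto
    then show ?thesis using N(3) True by auto
  next
    case False
    define x1 where "x1 = x /\<^sub>R norm x"
    have "x1 \<in> sphere 0 1" using False by (simp add: x1_def)
    then obtain u where u: "u \<in> N" "norm (u - x1) < \<epsilon>" using N(3) by (force simp: dist_norm)
    have "u \<bullet> x = norm x + (u - x1) \<bullet> x"
      using False by (simp add: x1_def inner_diff_left dot_square_norm power2_eq_square)
    moreover have "- ((u - x1) \<bullet> x) \<le> \<epsilon> * norm x"
      using Cauchy_Schwarz_ineq2[of "u - x1" x] mult_right_mono[OF less_imp_le[OF u(2)] norm_ge_zero[of x]]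
      by linarith
    ultimately show ?thesis
      using u(1) by (intro bexI[of _ u]) (auto simp: left_diff_distrib)
  qed
  then show ?thesis using N that by blast
qed

lemma levy_norm_tail_le:
  fixes M :: "'a measure" and X :: "real \<Rightarrow> 'a \<Rightarrow> real^'n" and nu :: "(real^'n) measure"
  assumes X: "levy_process M X S (density nu (indicator (cball 0 h))) G"
    and L: "levy_measure nu" and h: "h \<ge> 1" and t: "t \<ge> 0"
    and N: "finite N" "N \<subseteq> sphere 0 1" "\<And>x. \<exists>u\<in>N. u \<bullet> x \<ge> (1 - \<epsilon>) * norm x"
    and \<epsilon>: "\<epsilon> < 1" and r: "r > 0" and \<theta>: "0 < \<theta>" "\<theta> < r"
  shows "measure M {\<omega> \<in> space M. norm (X t \<omega>) > \<Lambda>}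
     \<le> (\<Sum>u\<in>N. exp (- \<theta> * ((1 - \<epsilon>) * \<Lambda>)) * (2 * exp (t * line_exponent_majorant S G nu h u r) / (1 - \<theta> / r)))"
proof -
  interpret prob_space M using X by (simp add: levy_process_def)
  have [measurable]: "X t \<in> borel_measurable M" using X t by (simp add: levy_process_def)
  have "{\<omega> \<in> space M. norm (X t \<omega>) > \<Lambda>} \<subseteq> (\<Union>u\<in>N. {\<omega> \<in> space M. u \<bullet> X t \<omega> > (1 - \<epsilon>) * \<Lambda>})"
  proof
    fix \<omega> assume \<omega>: "\<omega> \<in> {\<omega> \<in> space M. norm (X t \<omega>) > \<Lambda>}"
    obtain u where "u \<in> N" "u \<bullet> X t \<omega> \<ge> (1 - \<epsilon>) * norm (X t \<omega>)" using N(3) by blast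
    moreover have "(1 - \<epsilon>) * \<Lambda> < (1 - \<epsilon>) * norm (X t \<omega>)" using \<omega> \<epsilon> by simp
    ultimately show "\<omega> \<in> (\<Union>u\<in>N. {\<omega> \<in> space M. u \<bullet> X t \<omega> > (1 - \<epsilon>) * \<Lambda>})" using \<omega> by force
  qed
  then have "measure M {\<omega> \<in> space M. norm (X t \<omega>) > \<Lambda>}
      \<le> measure M (\<Union>u\<in>N. {\<omega> \<in> space M. u \<bullet> X t \<omega> > (1 - \<epsilon>) * \<Lambda>})"
    by (intro finite_measure_mono sets.finite_UN[OF N(1)]) measurable
  also have "\<dots> \<le> (\<Sum>u\<in>N. measure M {\<omega> \<in> space M. u \<bullet> X t \<omega> > (1 - \<epsilon>) * \<Lambda>})"
    by (rule measure_UNION_le[OF N(1)]) measurable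
  also have "\<dots> \<le> (\<Sum>u\<in>N. exp (- \<theta> * ((1 - \<epsilon>) * \<Lambda>)) * (2 * exp (t * line_exponent_majorant S G nu h u r) / (1 - \<theta> / r)))"
    using N(2) by (intro sum_mono levy_inner_tail_le[OF X L h _ t r \<theta>]) auto
  finally show ?thesis .
qed

lemma line_exponent_majorant_le_exp:
  assumes r: "0 \<le> r" "h * r \<le> L" and h: "h \<ge> 1"
    and Q: "\<bar>u \<bullet> (S *v u)\<bar> \<le> Q" "\<bar>u \<bullet> G\<bar> \<le> Q"
  shows "line_exponent_majorant S G nu h u r \<le> (3 * Q + (\<integral>y. min 1 ((norm y)\<^sup>2) \<partial>nu)) * exp L"
proof -
  have rL: "r \<le> L" using r h mult_right_mono[OF h r(1)] by simp
  have rexp: "r \<le> exp L"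
    using rL exp_ge_add_one_self[of L] by linarith
  have "r^2 \<le> L^2"
    using power_mono[OF rL r(1)] by blast
  then have "r^2 \<le> 2 * exp L"
    using exp_lower_Taylor_quadratic[of L] rL r(1) by linarith
  then have "r^2 * \<bar>u \<bullet> (S *v u)\<bar> \<le> 2 * exp L * Q"
    using Q(1) r(1) by (intro mult_mono) auto
  moreover have "r * \<bar>u \<bullet> G\<bar> \<le> exp L * Q"
    using rexp Q(2) r(1) by (intro mult_mono) auto
  moreover have "exp (h * r) * (\<integral>y. min 1 ((norm y)\<^sup>2) \<partial>nu) \<le> exp L * (\<integral>y. min 1 ((norm y)\<^sup>2) \<partial>nu)"
    using r(2) by (intro mult_right_mono integral_nonneg_AE) auto
  ultimately show ?thesis
    unfolding line_exponent_majorant_def by (simp add: algebra_simps)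
qed

lemma levy_norm_tail_le_exp:
  fixes M :: "'a measure" and X :: "real \<Rightarrow> 'a \<Rightarrow> real^'n" and nu :: "(real^'n) measure"
  assumes X: "levy_process M X S (density nu (indicator (cball 0 h))) G"
    and L: "levy_measure nu" and h: "h \<ge> 1" and t: "0 < t" "t < \<Lambda> / h"
    and N: "finite N" "N \<subseteq> sphere 0 1" "\<And>x. \<exists>u\<in>N. u \<bullet> x \<ge> (1 - \<epsilon>) * norm x"
    and \<epsilon>: "0 < \<epsilon>" "\<epsilon> < 1"
    and Q: "\<And>u. u \<in> N \<Longrightarrow> \<bar>u \<bullet> (S *v u)\<bar> \<le> Q \<and> \<bar>u \<bullet> G\<bar> \<le> Q"
  defines "C \<equiv> 3 * Q + (\<integral>y. min 1 ((norm y)\<^sup>2) \<partial>nu)"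
  shows "measure M {\<omega> \<in> space M. norm (X t \<omega>) > \<Lambda>}
     \<le> real (card N) * (2 / \<epsilon>) * exp (C * (\<Lambda> / h) - (1 - \<epsilon>)^3 * (\<Lambda> / h) * ln (\<Lambda> / (h * t)))"
proof -
  define x where "x = \<Lambda> / h"
  define l where "l = ln (x / t)"
  \<comment> \<open>This radius gives t * exp (h * r) \<le> x, so the majorant contributes only O(x) to the exponent.\<close>
  define r where "r = (1 - \<epsilon>) * l / h"
  define \<theta> where "\<theta> = (1 - \<epsilon>) * r"
  have "1 < x / t" using t by (simp add: x_def[symmetric])
  then have l: "0 < l" and tx: "t * exp l = x"
    using t by (simp_all add: l_def)
  have r: "0 < r" using l \<epsilon> h by (simp add: r_def)
  then have \<theta>: "0 < \<theta>" "\<theta> < r" and "1 - \<theta> / r = \<epsilon>"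
    using \<epsilon> by (simp_all add: \<theta>_def mult_less_cancel_right1)
  then have "measure M {\<omega> \<in> space M. norm (X t \<omega>) > \<Lambda>}
      \<le> (\<Sum>u\<in>N. exp (- \<theta> * ((1 - \<epsilon>) * \<Lambda>)) * (2 * exp (t * line_exponent_majorant S G nu h u r) / \<epsilon>))"
    using levy_norm_tail_le[OF X L h less_imp_le[OF t(1)] N \<epsilon>(2) r \<theta>] by simp
  also have "\<dots> \<le> (\<Sum>u\<in>N. exp (- \<theta> * ((1 - \<epsilon>) * \<Lambda>)) * (2 * exp (C * x) / \<epsilon>))"
  proof (intro sum_mono mult_left_mono divide_right_mono)
    fix u assume "u \<in> N"
    have "h * r \<le> l" using l \<epsilon> h by (simp add: r_def)
    then have "line_exponent_majorant S G nu h u r \<le> C * exp l"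
      unfolding C_def using Q[OF \<open>u \<in> N\<close>]
      by (intro line_exponent_majorant_le_exp[OF less_imp_le[OF r] _ h]) auto
    then have "t * line_exponent_majorant S G nu h u r \<le> t * (C * exp l)"
      using t by (simp add: mult_left_mono)
    then show "exp (t * line_exponent_majorant S G nu h u r) \<le> exp (C * x)"
      using tx by (simp add: algebra_simps)
  qed (use \<epsilon> in auto)
  also have "\<dots> = real (card N) * (2 / \<epsilon>) * (exp (- \<theta> * ((1 - \<epsilon>) * \<Lambda>)) * exp (C * x))"
    by (simp add: algebra_simps)
  also have "exp (- \<theta> * ((1 - \<epsilon>) * \<Lambda>)) * exp (C * x) = exp (C * x - (1 - \<epsilon>)^3 * x * l)"
    unfolding mult_exp_exp using h
    by (intro arg_cong[where f = exp]) (simp add: \<theta>_def r_def x_def power3_eq_cube field_simps)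
  finally show ?thesis
    by (simp add: x_def l_def)
qed

lemma levy_tail_uniform:
  fixes nu :: "(real^'n) measure"
  assumes L: "levy_measure nu" and \<epsilon>: "0 < \<epsilon>" "\<epsilon> < 1"
  obtains C K where "K > 0"
    "\<And>(M :: 'a measure) X h t \<Lambda>. levy_process M X S (density nu (indicator (cball 0 h))) G \<Longrightarrow>
       h \<ge> 1 \<Longrightarrow> 0 < t \<Longrightarrow> t < \<Lambda> / h \<Longrightarrow>
       measure M {\<omega> \<in> space M. norm (X t \<omega>) > \<Lambda>}
         \<le> K * exp (C * (\<Lambda> / h) - (1 - \<epsilon>) * (\<Lambda> / h) * ln (\<Lambda> / (h * t)))"
proof -
  obtain N :: "(real^'n) set" where N: "finite N" "N \<subseteq> sphere 0 1"
    "\<And>x. \<exists>u\<in>N. u \<bullet> x \<ge> (1 - \<epsilon>/3) * norm x"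
    using finite_direction_net[of "\<epsilon>/3"] \<epsilon> by auto
  define Q where "Q = (\<Sum>u\<in>N. \<bar>u \<bullet> (S *v u)\<bar> + \<bar>u \<bullet> G\<bar>)"
  have Q: "\<bar>u \<bullet> (S *v u)\<bar> \<le> Q \<and> \<bar>u \<bullet> G\<bar> \<le> Q" if "u \<in> N" for u
    using member_le_sum[OF that _ N(1), of "\<lambda>u. \<bar>u \<bullet> (S *v u)\<bar> + \<bar>u \<bullet> G\<bar>"] by (auto simp: Q_def)
  define C where "C = 3 * Q + (\<integral>y. min 1 ((norm y)\<^sup>2) \<partial>nu)"
  define K where "K = real (card N) * (2 / (\<epsilon>/3))"
  have "N \<noteq> {}" using N(3)[of 0] by auto
  then have K_pos: "K > 0" using N(1) \<epsilon> by (simp add: K_def card_gt_0_iff)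
  have cube: "1 - \<epsilon> \<le> (1 - \<epsilon>/3)^3"
  proof -
    have "(1 - \<epsilon>/3)^3 = 1 - \<epsilon> + (\<epsilon>/3)^2 * (3 - \<epsilon>/3)"
      by (simp add: power3_eq_cube power2_eq_square field_simps)
    then show ?thesis using \<epsilon> by simp
  qed
  show ?thesis
  proof (rule that[of K C, OF K_pos])
    fix M :: "'a measure" and X h t \<Lambda>
    assume X: "levy_process M X S (density nu (indicator (cball 0 h))) G"
      and h: "h \<ge> 1" and t: "0 < t" "t < \<Lambda> / h"
    have "1 < \<Lambda> / (h * t)" using t h by (simp add: field_simps)
    moreover have "0 < \<Lambda> / h" using t by linarith
    ultimately have "0 \<le> (\<Lambda> / h) * ln (\<Lambda> / (h * t))"
      by (metis less_imp_le ln_gt_zero mult_nonneg_nonneg)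
    then have "(1 - \<epsilon>) * ((\<Lambda> / h) * ln (\<Lambda> / (h * t))) \<le> (1 - \<epsilon>/3)^3 * ((\<Lambda> / h) * ln (\<Lambda> / (h * t)))"
      by (rule mult_right_mono[OF cube])
    then have "K * exp (C * (\<Lambda> / h) - (1 - \<epsilon>/3)^3 * (\<Lambda> / h) * ln (\<Lambda> / (h * t)))
        \<le> K * exp (C * (\<Lambda> / h) - (1 - \<epsilon>) * (\<Lambda> / h) * ln (\<Lambda> / (h * t)))"
      using K_pos by (simp add: mult.assoc)
    with levy_norm_tail_le_exp[OF X L h t N _ _ Q] \<epsilon>
    show "measure M {\<omega> \<in> space M. norm (X t \<omega>) > \<Lambda>}
        \<le> K * exp (C * (\<Lambda> / h) - (1 - \<epsilon>) * (\<Lambda> / h) * ln (\<Lambda> / (h * t)))"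
      unfolding C_def K_def by linarith
  qed
qed

lemma tail_bound_absorb_constants:
  fixes x t T k d C K :: real
  assumes t: "0 < t" "t \<le> T" and d: "0 < d" "d \<le> 1/2" and k: "0 \<le> k" "12 * k \<le> d * x"
    and x: "1 \<le> x" and K: "0 < K"
    and C: "6 * C \<le> d * ln (x / T)" and lnK: "6 * \<bar>ln K\<bar> \<le> d * ln (x / T)"
  shows "max 1 (t powr (-k)) * (K * exp (C * x - (1 - d/2) * x * ln (x / t)))
       \<le> exp (- (1 - d) * x * ln (x / T))"
proof -
  define R where "R = ln (x / T)"
  define D where "D = ln T - ln t"
  have "0 \<le> d * R" unfolding R_def using lnK abs_ge_zero[of "ln K"] by linarith
  then have R: "0 \<le> R" using d by (simp add: zero_le_mult_iff)
  have D: "0 \<le> D" using t by (simp add: D_def)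
  have lnxt: "ln (x / t) = R + D" using t x by (simp add: R_def D_def ln_div)
  have "- k * ln t = k * D + k * (- ln T)" by (simp add: D_def algebra_simps)
  also have "\<dots> \<le> k * D + k * R"
    using t x k by (intro add_left_mono mult_left_mono) (auto simp: R_def ln_div)
  finally have mt: "max 0 (- k * ln t) \<le> k * D + k * R"
    using k D R by simp
  have split: "(1 - d/2) * x * (R + D) = x * R + x * D - d * (x * R) / 2 - d * (x * D) / 2"
    "- (1 - d) * x * R = - (x * R) + d * (x * R)"
    by (simp_all add: algebra_simps)
  have "d * x \<le> x / 2" using mult_right_mono[OF d(2), of x] x by simp
  then have "k \<le> (1 - d/2) * x" using k by (simp add: algebra_simps)
  then have "k * D \<le> x * D - d * (x * D) / 2"
    using mult_right_mono[of k "(1 - d/2) * x" D] D by (simp add: algebra_simps)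
  moreover have "k * R \<le> d * (x * R) / 12"
    using mult_right_mono[of k "d * x / 12" R] k R by (simp add: algebra_simps)
  moreover have "C * x \<le> d * (x * R) / 6"
    using mult_right_mono[of C "d * R / 6" x] C x by (simp add: R_def algebra_simps)
  moreover have "d * R \<le> d * (x * R)"
    using mult_right_mono[OF x R] d by (intro mult_left_mono) auto
  then have "ln K \<le> d * (x * R) / 6"
    using lnK by (simp add: R_def)
  moreover have "0 \<le> d * (x * R)" using d x R by simp
  ultimately have "max 0 (- k * ln t) + ln K + (C * x - (1 - d/2) * x * (R + D)) \<le> - (1 - d) * x * R"
    unfolding split using mt by linarith
  moreover have "exp (max 0 (- k * ln t)) * (K * exp (C * x - (1 - d/2) * x * ln (x / t)))
      = exp (max 0 (- k * ln t) + ln K + (C * x - (1 - d/2) * x * (R + D)))"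
    using K by (simp add: lnxt exp_add)
  ultimately have "exp (max 0 (- k * ln t)) * (K * exp (C * x - (1 - d/2) * x * ln (x / t)))
      \<le> exp (- (1 - d) * x * ln (x / T))"
    by (simp add: R_def)
  moreover have "max 1 (t powr (-k)) = exp (max 0 (- k * ln t))"
    using t by (simp add: powr_def max_def)
  ultimately show ?thesis by simp
qed

lemma levy_weighted_tail_le:
  fixes nu :: "(real^'n) measure" and \<delta> k :: real
  assumes L: "levy_measure nu" and \<delta>: "0 < \<delta>" and k: "0 \<le> k"
  obtains c where
    "\<And>(M :: 'a measure) X h T t \<Lambda>. levy_process M X S (density nu (indicator (cball 0 h))) G \<Longrightarrow>
       h \<ge> 1 \<Longrightarrow> 0 < t \<Longrightarrow> t \<le> T \<Longrightarrow> c \<le> \<Lambda> / h \<Longrightarrow> c \<le> ln (\<Lambda> / (h * T)) \<Longrightarrow>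
       max 1 (t powr (-k)) * measure M {\<omega> \<in> space M. norm (X t \<omega>) > \<Lambda>}
         \<le> exp (- (1 - \<delta>) * (\<Lambda> / h) * ln (\<Lambda> / (h * T)))"
proof -
  define d where "d = min \<delta> (1/2)"
  have d: "0 < d" "d \<le> 1/2" "d \<le> \<delta>" using \<delta> by (auto simp: d_def)
  obtain C K where K: "K > 0" and tail:
    "\<And>(M :: 'a measure) X h t \<Lambda>. levy_process M X S (density nu (indicator (cball 0 h))) G \<Longrightarrow>
       h \<ge> 1 \<Longrightarrow> 0 < t \<Longrightarrow> t < \<Lambda> / h \<Longrightarrow>
       measure M {\<omega> \<in> space M. norm (X t \<omega>) > \<Lambda>}
         \<le> K * exp (C * (\<Lambda> / h) - (1 - d/2) * (\<Lambda> / h) * ln (\<Lambda> / (h * t)))"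
    by (rule levy_tail_uniform[OF L, where \<epsilon> = "d/2" and S = S and G = G]) (use d in auto)
  show ?thesis
  proof (rule that[of "max (1 + 12 * k / d) (1 + 6 * (\<bar>C\<bar> + \<bar>ln K\<bar>) / d)"])
    fix M :: "'a measure" and X h T t \<Lambda>
    assume X: "levy_process M X S (density nu (indicator (cball 0 h))) G"
      and h: "h \<ge> 1" and t: "0 < t" "t \<le> T"
      and "max (1 + 12 * k / d) (1 + 6 * (\<bar>C\<bar> + \<bar>ln K\<bar>) / d) \<le> \<Lambda> / h"
      and "max (1 + 12 * k / d) (1 + 6 * (\<bar>C\<bar> + \<bar>ln K\<bar>) / d) \<le> ln (\<Lambda> / (h * T))"
    then have large_x: "1 + 12 * k / d \<le> \<Lambda> / h"
      and large_R: "1 + 6 * (\<bar>C\<bar> + \<bar>ln K\<bar>) / d \<le> ln (\<Lambda> / (h * T))"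
      by simp_all
    define x where "x = \<Lambda> / h"
    have "0 \<le> 12 * k / d" using d k by simp
    then have x1: "1 \<le> x" using large_x by (simp add: x_def)
    have "12 * k \<le> d * x" using large_x d by (simp add: x_def field_simps)
    have A: "6 * (\<bar>C\<bar> + \<bar>ln K\<bar>) / d \<le> ln (x / T) - 1"
      using large_R by (simp add: x_def)
    moreover have "0 \<le> 6 * (\<bar>C\<bar> + \<bar>ln K\<bar>) / d" using d by simp
    ultimately have "0 < ln (x / T)" by linarith
    have "6 * (\<bar>C\<bar> + \<bar>ln K\<bar>) \<le> d * (ln (x / T) - 1)"
      using A d by (simp add: pos_divide_le_eq mult.commute)
    then have R': "6 * (\<bar>C\<bar> + \<bar>ln K\<bar>) \<le> d * ln (x / T)"
      using d by (simp add: right_diff_distrib)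
    from \<open>0 < ln (x / T)\<close> have "t < x"
      using t x1 ln_gt_zero_iff[of "x / T"] by (simp add: less_divide_eq_1_pos)
    then have "measure M {\<omega> \<in> space M. norm (X t \<omega>) > \<Lambda>}
        \<le> K * exp (C * x - (1 - d/2) * x * ln (x / t))"
      using tail[OF X h t(1)] by (simp add: x_def)
    then have "max 1 (t powr (-k)) * measure M {\<omega> \<in> space M. norm (X t \<omega>) > \<Lambda>}
        \<le> max 1 (t powr (-k)) * (K * exp (C * x - (1 - d/2) * x * ln (x / t)))"
      by (rule mult_left_mono) simp
    also have "\<dots> \<le> exp (- (1 - d) * x * ln (x / T))"
      using R' by (intro tail_bound_absorb_constants[OF t d(1,2) k(1) \<open>12 * k \<le> d * x\<close> x1 K]) auto
    also have "\<dots> \<le> exp (- (1 - \<delta>) * x * ln (x / T))"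
      using mult_right_mono[OF d(3), of "x * ln (x / T)"] x1 \<open>0 < ln (x / T)\<close>
      by (simp add: algebra_simps)
    finally show "max 1 (t powr (-k)) * measure M {\<omega> \<in> space M. norm (X t \<omega>) > \<Lambda>}
        \<le> exp (- (1 - \<delta>) * (\<Lambda> / h) * ln (\<Lambda> / (h * T)))"
      by (simp add: x_def)
  qed
qed

theorem lemmaA1:
  fixes nu :: "(real^'n) measure"
    and S :: "real^'n^'n"
    and G :: "real^'n"
    and h T :: "real \<Rightarrow> real"
    and M :: "real \<Rightarrow> 'a measure"
    and \<xi> :: "real \<Rightarrow> real \<Rightarrow> 'a \<Rightarrow> real^'n"
  assumes "levy_measure nu"
    and "sym_nonneg_def S"
    and "\<forall>\<Lambda>>1. h \<Lambda> \<ge> 1 \<and> T \<Lambda> > 0"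
    and "filterlim (\<lambda>\<Lambda>. \<Lambda> / h \<Lambda>) at_top at_top"
    and "filterlim (\<lambda>\<Lambda>. \<Lambda> / (h \<Lambda> * T \<Lambda>)) at_top at_top"
    and "\<forall>\<Lambda>>1. levy_process (M \<Lambda>) (\<xi> \<Lambda>) S
                  (density nu (indicator (cball 0 (h \<Lambda>)))) G"
  shows "\<forall>\<delta>>0. \<forall>k\<ge>0. \<exists>\<Lambda>\<^sub>1. \<forall>\<Lambda>. \<Lambda> > \<Lambda>\<^sub>1 \<and> \<Lambda> > 1 \<longrightarrow>
           (\<forall>t\<in>{0<..T \<Lambda>}.
              max 1 (t powr (-k)) * measure (M \<Lambda>) {\<omega> \<in> space (M \<Lambda>). norm (\<xi> \<Lambda> t \<omega>) > \<Lambda>}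
              \<le> exp (- (1 - \<delta>) * (\<Lambda> / h \<Lambda>) * ln (\<Lambda> / (h \<Lambda> * T \<Lambda>))))"
proof (intro allI impI)
  fix \<delta> k :: real
  assume "0 < \<delta>" and "0 \<le> k"
  obtain c where weighted: "\<And>(M' :: 'a measure) X h T t \<Lambda>.
      levy_process M' X S (density nu (indicator (cball 0 h))) G \<Longrightarrow>
      h \<ge> 1 \<Longrightarrow> 0 < t \<Longrightarrow> t \<le> T \<Longrightarrow> c \<le> \<Lambda> / h \<Longrightarrow> c \<le> ln (\<Lambda> / (h * T)) \<Longrightarrow>
      max 1 (t powr (-k)) * measure M' {\<omega> \<in> space M'. norm (X t \<omega>) > \<Lambda>}
        \<le> exp (- (1 - \<delta>) * (\<Lambda> / h) * ln (\<Lambda> / (h * T)))"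
    by (rule levy_weighted_tail_le[OF assms(1) \<open>0 < \<delta>\<close> \<open>0 \<le> k\<close>, where S = S and G = G]) auto
  have "eventually (\<lambda>\<Lambda>. c \<le> \<Lambda> / h \<Lambda>) at_top"
    using assms(4) unfolding filterlim_at_top by blast
  moreover have "eventually (\<lambda>\<Lambda>. c \<le> ln (\<Lambda> / (h \<Lambda> * T \<Lambda>))) at_top"
    using filterlim_compose[OF ln_at_top assms(5)] unfolding filterlim_at_top by blast
  ultimately have "eventually (\<lambda>\<Lambda>. c \<le> \<Lambda> / h \<Lambda> \<and> c \<le> ln (\<Lambda> / (h \<Lambda> * T \<Lambda>))) at_top"
    by (rule eventually_conj)
  then obtain \<Lambda>\<^sub>1 where
    "\<And>\<Lambda>. \<Lambda> \<ge> \<Lambda>\<^sub>1 \<Longrightarrow> c \<le> \<Lambda> / h \<Lambda> \<and> c \<le> ln (\<Lambda> / (h \<Lambda> * T \<Lambda>))"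
    unfolding eventually_at_top_linorder by blast
  then show "\<exists>\<Lambda>\<^sub>1. \<forall>\<Lambda>. \<Lambda> > \<Lambda>\<^sub>1 \<and> \<Lambda> > 1 \<longrightarrow>
           (\<forall>t\<in>{0<..T \<Lambda>}.
              max 1 (t powr (-k)) * measure (M \<Lambda>) {\<omega> \<in> space (M \<Lambda>). norm (\<xi> \<Lambda> t \<omega>) > \<Lambda>}
              \<le> exp (- (1 - \<delta>) * (\<Lambda> / h \<Lambda>) * ln (\<Lambda> / (h \<Lambda> * T \<Lambda>))))"
    using assms(3,6) by (intro exI[of _ \<Lambda>\<^sub>1] allI impI ballI weighted) auto
qed

end
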